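(* For every $n\geq0$ and every finite field $\mathbb{F}_q$, $\sum_{\alpha\in\mathbb{F}_q^*}N_{\mathbb{A}_n}(\alpha)=\frac{q^{n+2}+(-1)^{n+1}}{q+1}$, and this is the number of $\mathbb{F}_q$-points of $Y_{\mathbb{A}_n}$.
   Context: For $\alpha$ invertible and $n\ge1$, $X_n(\alpha)$ is the affine variety in variables $x_1,\dots,x_n,x'_1,\dots,x'_n$ defined by $x_1x'_1=1+\alpha x_2$, $x_ix'_i=1+x_{i-1}x_{i+1}$ for $2\le i\le n-1$, $x_nx'_n=1+x_{n-1}$ (for $n=1$: $x_1x'_1=1+\alpha$); $X_0(\alpha)$ is a point. $N_{\mathbb{A}_n}(\alpha)$ is the number of $\mathbb{F}_q$-points of $X_n(\alpha)$. $Y_{\mathbb{A}_n}$ is the variety in variables $(\alpha,x_1,\dots,x_n,x'_1,\dots,x'_n)$ with $\alpha\neq0$ defined by the same equations (the union of all $X_n(\alpha)$, $\alpha$ invertible); by convention $Y_{\mathbb{A}_0}=\mathbb{A}^1\setminus\{0\}$. *)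

theory Defs
  imports Complex_Main
begin

text \<open>Equations of X_n(alpha) in variables x_1..x_n, x'_1..x'_n (1-based indices,
  coordinates stored as functions nat => 'a).\<close>
definition A_eqs :: "nat \<Rightarrow> 'a::field \<Rightarrow> (nat \<Rightarrow> 'a) \<Rightarrow> (nat \<Rightarrow> 'a) \<Rightarrow> bool" where
  "A_eqs n \<alpha> x x' \<longleftrightarrow>
     (if n = 0 then True
      else if n = 1 then x 1 * x' 1 = 1 + \<alpha>
      else x 1 * x' 1 = 1 + \<alpha> * x 2
         \<and> (\<forall>i. 2 \<le> i \<and> i \<le> n - 1 \<longrightarrow> x i * x' i = 1 + x (i - 1) * x (i + 1))
         \<and> x n * x' n = 1 + x (n - 1))"

definition coords :: "nat \<Rightarrow> (nat \<Rightarrow> 'a::zero) set" where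
  "coords n = {x. \<forall>i. i \<notin> {1..n} \<longrightarrow> x i = 0}"

definition X_A :: "nat \<Rightarrow> 'a::field \<Rightarrow> ((nat \<Rightarrow> 'a) \<times> (nat \<Rightarrow> 'a)) set" where
  "X_A n \<alpha> = {(x, x'). x \<in> coords n \<and> x' \<in> coords n \<and> A_eqs n \<alpha> x x'}"

definition N_A :: "nat \<Rightarrow> 'a::{finite,field} \<Rightarrow> nat" where
  "N_A n \<alpha> = card (X_A n \<alpha>)"

text \<open>Y_{A_n}: union over invertible alpha; for n = 0 this is A^1 minus 0, as by convention.\<close>
definition Y_A :: "nat \<Rightarrow> ('a::field \<times> (nat \<Rightarrow> 'a) \<times> (nat \<Rightarrow> 'a)) set" where
  "Y_A n = {(\<alpha>, x, x'). \<alpha> \<noteq> 0 \<and> x \<in> coords n \<and> x' \<in> coords n \<and> A_eqs n \<alpha> x x'}"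

end

theory Submission
  imports Defs
begin

text \<open>Put \<open>x\<^sub>0 = \<alpha>\<close> and \<open>x\<^sub>n\<^sub>+\<^sub>1 = 1\<close>, so that all equations read
  \<open>x\<^sub>i x'\<^sub>i = 1 + x\<^sub>i\<^sub>-\<^sub>1 x\<^sub>i\<^sub>+\<^sub>1\<close>. Removing the first equation leaves the same system of
  length \<open>n - 1\<close> with \<open>x\<^sub>1\<close> in the role of \<open>\<alpha>\<close>. If \<open>x\<^sub>1 \<noteq> 0\<close>, then \<open>x'\<^sub>1\<close> is determined;
  if \<open>x\<^sub>1 = 0\<close>, then \<open>x'\<^sub>1\<close> is free and the first equation forces \<open>x\<^sub>2 = -1/\<alpha>\<close>, which in
  turn determines \<open>x'\<^sub>2\<close>. Summing over \<open>\<alpha> \<noteq> 0\<close> and using that \<open>\<alpha> \<mapsto> -1/\<alpha>\<close> permutes the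
  nonzero elements, the totals \<open>S\<^sub>n\<close> satisfy \<open>S\<^sub>n\<^sub>+\<^sub>2 = (q - 1) S\<^sub>n\<^sub>+\<^sub>1 + q S\<^sub>n\<close> with
  \<open>S\<^sub>0 = q - 1\<close> and \<open>S\<^sub>1 = q\<^sup>2 - q + 1\<close>, whose solution is the stated closed form.
  \<open>Y\<^sub>A\<^sub>n\<close> is the disjoint union of the \<open>X\<^sub>n(\<alpha>)\<close>.\<close>

text \<open>\<open>chain_eqs a [x\<^sub>1, \<dots>, x\<^sub>n] [x'\<^sub>1, \<dots>, x'\<^sub>n]\<close> are the equations of \<open>X\<^sub>n(a)\<close>, i.e.
  \<open>x\<^sub>i x'\<^sub>i = 1 + x\<^sub>i\<^sub>-\<^sub>1 x\<^sub>i\<^sub>+\<^sub>1\<close> with \<open>x\<^sub>0 = a\<close> and \<open>x\<^sub>n\<^sub>+\<^sub>1 = 1\<close>.\<close>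

fun chain_eqs :: "'a::field \<Rightarrow> 'a list \<Rightarrow> 'a list \<Rightarrow> bool" where
  "chain_eqs a [] [] \<longleftrightarrow> True"
| "chain_eqs a (x # xs) (x' # xs') \<longleftrightarrow> x * x' = 1 + a * hd (xs @ [1]) \<and> chain_eqs x xs xs'"
| "chain_eqs a _ _ \<longleftrightarrow> False"

definition chain_sols :: "nat \<Rightarrow> 'a::field \<Rightarrow> ('a list \<times> 'a list) set" where
  "chain_sols n a = {(xs, xs'). length xs = n \<and> chain_eqs a xs xs'}"

lemma chain_eqs_length: "chain_eqs a xs xs' \<Longrightarrow> length xs' = length xs"
  by (induction a xs xs' rule: chain_eqs.induct) auto

lemma chain_eqs_nth:
  "chain_eqs a xs xs' \<longleftrightarrow> length xs' = length xs \<and>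
     (\<forall>i<length xs. xs ! i * xs' ! i = 1 + (a # xs @ [1]) ! i * (a # xs @ [1]) ! Suc (Suc i))"
proof (induction xs arbitrary: a xs')
  case Nil
  then show ?case by (cases xs') auto
next
  case (Cons x xs)
  then show ?case
    by (cases xs') (auto simp: All_less_Suc2 hd_conv_nth nth_append)
qed

lemma chain_sols_0: "chain_sols 0 a = {([], [])}"
  unfolding chain_sols_def using chain_eqs_length by fastforce

lemma finite_chain_sols: "finite (chain_sols n (a::'a::{finite,field}))"
proof (rule finite_subset)
  let ?L = "{xs. set xs \<subseteq> (UNIV::'a set) \<and> length xs = n}"
  show "chain_sols n a \<subseteq> ?L \<times> ?L"
    unfolding chain_sols_def using chain_eqs_length by fastforce
  show "finite (?L \<times> ?L)"
    by (intro finite_cartesian_product finite_lists_length_eq) auto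
qed

lemma card_linear_solutions:
  "card {y. (x::'a::{finite,field}) * y = c} =
     (if x \<noteq> 0 then 1 else if c = 0 then card (UNIV::'a set) else 0)"
proof (cases "x = 0")
  case False
  then have "{y. x * y = c} = {c / x}" by (auto simp: field_simps)
  then show ?thesis using False by simp
qed simp

lemma chain_sols_Suc:
  "chain_sols (Suc n) a = (\<lambda>(x, (xs, xs'), x'). (x # xs, x' # xs')) `
     (SIGMA x:UNIV. SIGMA p:chain_sols n x. {x'. x * x' = 1 + a * hd (fst p @ [1])})"
  (is "_ = ?cons ` ?T")
proof
  show "chain_sols (Suc n) a \<subseteq> ?cons ` ?T"
  proof
    fix p assume "p \<in> chain_sols (Suc n) a"
    then obtain x xs x' xs' where "p = (x # xs, x' # xs')" "(x, (xs, xs'), x') \<in> ?T"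
      unfolding chain_sols_def by (auto simp: length_Suc_conv elim: chain_eqs.elims)
    then show "p \<in> ?cons ` ?T" by force
  qed
  show "?cons ` ?T \<subseteq> chain_sols (Suc n) a"
    unfolding chain_sols_def by auto
qed

lemma card_chain_sols_Suc_head:
  fixes a :: "'a::{finite,field}"
  shows "card {p \<in> chain_sols (Suc n) a. P (hd (fst p))} =
    (\<Sum>x | P x. \<Sum>p\<in>chain_sols n x. card {x'. x * x' = 1 + a * hd (fst p @ [1])})"
proof -
  let ?cons = "\<lambda>(x::'a, (xs, xs'), x'::'a). (x # xs, x' # xs')"
  let ?T = "SIGMA x:{x. P x}. SIGMA p:chain_sols n x. {x'. x * x' = 1 + a * hd (fst p @ [1])}"
  have "{p \<in> chain_sols (Suc n) a. P (hd (fst p))} = ?cons ` ?T"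
    unfolding chain_sols_Suc by force
  moreover have "inj_on ?cons ?T" by (auto simp: inj_on_def)
  ultimately have "card {p \<in> chain_sols (Suc n) a. P (hd (fst p))} = card ?T"
    by (simp add: card_image)
  also have "\<dots> = (\<Sum>x | P x. \<Sum>p\<in>chain_sols n x. card {x'. x * x' = 1 + a * hd (fst p @ [1])})"
    by (simp add: finite_chain_sols)
  finally show ?thesis .
qed

text \<open>The tails \<open>(x\<^sub>2\<dots>, x'\<^sub>2\<dots>)\<close> of the solutions of \<open>chain_sols (Suc n) a\<close> with \<open>x\<^sub>1 = 0\<close>;
  for each of them \<open>x'\<^sub>1\<close> is arbitrary.\<close>
definition zero_start_tails :: "nat \<Rightarrow> 'a::field \<Rightarrow> ('a list \<times> 'a list) set" where
  "zero_start_tails n a = {p \<in> chain_sols n 0. 1 + a * hd (fst p @ [1]) = 0}"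

lemma card_chain_sols_Suc:
  fixes a :: "'a::{finite,field}"
  shows "card (chain_sols (Suc n) a) = (\<Sum>x\<in>UNIV - {0::'a}. card (chain_sols n x))
    + card (UNIV::'a set) * card (zero_start_tails n a)"
proof -
  have "card (chain_sols (Suc n) a) =
      (\<Sum>x\<in>UNIV. \<Sum>p\<in>chain_sols n x. card {x'. x * x' = 1 + a * hd (fst p @ [1])})"
    using card_chain_sols_Suc_head[of n a "\<lambda>_. True"] by simp
  also have "\<dots> = (\<Sum>p\<in>chain_sols n 0. card {x'. 0 * x' = 1 + a * hd (fst p @ [1])})
      + (\<Sum>x\<in>UNIV - {0::'a}. \<Sum>p\<in>chain_sols n x. card {x'. x * x' = 1 + a * hd (fst p @ [1])})"
    by (simp add: sum.remove[of UNIV 0])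
  also have "(\<Sum>p\<in>chain_sols n 0. card {x'. 0 * x' = 1 + a * hd (fst p @ [1])})
      = card (UNIV::'a set) * card (zero_start_tails n a)"
    by (simp add: zero_start_tails_def card_linear_solutions if_distrib[of card] sum.If_cases
        finite_chain_sols Collect_conj_eq mult.commute)
  also have "(\<Sum>x\<in>UNIV - {0::'a}.
        \<Sum>p\<in>chain_sols n x. card {x'. x * x' = 1 + a * hd (fst p @ [1])})
      = (\<Sum>x\<in>UNIV - {0::'a}. card (chain_sols n x))"
    by (simp add: card_linear_solutions)
  finally show ?thesis by simp
qed

lemma card_zero_start_tails_0:
  "card (zero_start_tails 0 (a::'a::field)) = (if a = -1 then 1 else 0)"
proof -
  have "1 + a = 0 \<longleftrightarrow> a = -1" by (simp add: add_eq_0_iff)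
  then have start:
    "{p \<in> {([], [])}. 1 + a * hd (fst p @ [1]) = 0} = (if a = -1 then {([], [])} else {})"
    by auto
  show ?thesis by (simp only: zero_start_tails_def chain_sols_0 start) simp
qed

lemma card_zero_start_tails_Suc:
  fixes a :: "'a::{finite,field}"
  assumes "a \<noteq> 0"
  shows "card (zero_start_tails (Suc n) a) = card (chain_sols n (-1/a))"
proof -
  have "zero_start_tails (Suc n) a =
        {p \<in> chain_sols (Suc n) 0. hd (fst p) \<in> {-1/a}}"
    using assms by (auto simp: zero_start_tails_def chain_sols_def length_Suc_conv field_simps
        add_eq_0_iff)
  also have "card \<dots> =
      (\<Sum>p\<in>chain_sols n (-1/a). card {x'. (-1/a) * x' = 1 + 0 * hd (fst p @ [1])})"
    by (subst card_chain_sols_Suc_head) simp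
  also have "\<dots> = card (chain_sols n (-1/a))"
  proof -
    have "card {x'. (-1/a) * x' = c} = 1" for c
      by (simp only: card_linear_solutions) (use assms in simp)
    then show ?thesis by simp
  qed
  finally show ?thesis .
qed

lemma sum_card_chain_sols_Suc:
  "(\<Sum>a\<in>UNIV - {0::'a::{finite,field}}. card (chain_sols (Suc n) a)) =
     (card (UNIV::'a set) - 1) * (\<Sum>a\<in>UNIV - {0::'a}. card (chain_sols n a))
     + card (UNIV::'a set) * (\<Sum>a\<in>UNIV - {0::'a}. card (zero_start_tails n a))"
  by (simp add: card_chain_sols_Suc sum.distrib sum_distrib_left card_Diff_singleton)

lemma sum_card_chain_sols_0:
  "(\<Sum>a\<in>UNIV - {0::'a::{finite,field}}. card (chain_sols 0 a)) = card (UNIV::'a set) - 1"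
  by (simp add: chain_sols_0 card_Diff_singleton)

lemma sum_card_chain_sols_1:
  "(\<Sum>a\<in>UNIV - {0::'a::{finite,field}}. card (chain_sols 1 a)) =
     (card (UNIV::'a set) - 1) * (card (UNIV::'a set) - 1) + card (UNIV::'a set)"
proof -
  have "(\<Sum>a\<in>UNIV - {0::'a}. card (zero_start_tails 0 a)) = 1"
    by (simp add: card_zero_start_tails_0 sum.If_cases)
  then show ?thesis
    using sum_card_chain_sols_Suc[where 'a='a and n=0] by (simp add: sum_card_chain_sols_0)
qed

lemma sum_card_chain_sols_Suc_Suc:
  "(\<Sum>a\<in>UNIV - {0::'a::{finite,field}}. card (chain_sols (Suc (Suc n)) a)) =
     (card (UNIV::'a set) - 1) * (\<Sum>a\<in>UNIV - {0::'a}. card (chain_sols (Suc n) a))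
     + card (UNIV::'a set) * (\<Sum>a\<in>UNIV - {0::'a}. card (chain_sols n a))"
proof -
  have "(\<Sum>a\<in>UNIV - {0::'a}. card (zero_start_tails (Suc n) a))
      = (\<Sum>a\<in>UNIV - {0::'a}. card (chain_sols n (-1/a)))"
    by (simp add: card_zero_start_tails_Suc)
  also have "\<dots> = (\<Sum>a\<in>UNIV - {0::'a}. card (chain_sols n a))"
    by (rule sum.reindex_bij_witness[of _ "\<lambda>a. -1/a" "\<lambda>a. -1/a"]) (auto simp: field_simps)
  finally show ?thesis
    using sum_card_chain_sols_Suc[where 'a='a and n="Suc n"] by simp
qed

lemma two_step_recurrence_closed_form:
  fixes s :: "nat \<Rightarrow> 'a::comm_ring_1"
  assumes "s 0 = q - 1" and "s 1 = q^2 - q + 1"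
    and "\<And>n. s (Suc (Suc n)) = (q - 1) * s (Suc n) + q * s n"
  shows "s n * (q + 1) = q ^ (n + 2) + (-1) ^ (n + 1)"
proof (induction n rule: induct_nat_012)
  case (ge2 n)
  have "s (Suc (Suc n)) * (q + 1) = (q - 1) * (s (Suc n) * (q + 1)) + q * (s n * (q + 1))"
    by (simp add: assms(3) algebra_simps)
  also have "\<dots> = q ^ (Suc (Suc n) + 2) + (-1) ^ (Suc (Suc n) + 1)"
    unfolding ge2 by (simp add: algebra_simps)
  finally show ?case .
qed (simp_all add: assms(1) assms(2)[unfolded One_nat_def] algebra_simps power2_eq_square
    power3_eq_cube)

lemma A_eqs_iff:
  "A_eqs n a x x' \<longleftrightarrow>
     (\<forall>k\<in>{1..n}.
        x k * x' k = 1 + (if k = 1 then a else x (k - 1)) * (if k = n then 1 else x (k + 1)))"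
proof (cases "n \<le> 1")
  case True
  then show ?thesis unfolding A_eqs_def by (cases n) auto
next
  case False
  then have "{1..n} = insert 1 (insert n {2..n - 1})" by auto
  with False show ?thesis unfolding A_eqs_def by (auto simp: numeral_2_eq_2)
qed

lemma ball_atLeastAtMost_1_iff: "(\<forall>k\<in>{1..n}. P k) \<longleftrightarrow> (\<forall>i<n. P (Suc i))"
  by (auto simp: Suc_le_eq gr0_conv_Suc)

lemma nth_padded_map:
  "k \<le> n + 1 \<Longrightarrow>
    (a # map x [1..<n+1] @ [1]) ! k = (if k = 0 then a else if k \<le> n then x k else 1)"
  by (cases k) (auto simp: nth_append simp del: upt_Suc)

lemma A_eqs_iff_chain_eqs:
  "A_eqs n a x x' \<longleftrightarrow> chain_eqs a (map x [1..<n+1]) (map x' [1..<n+1])"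
proof -
  define pad where "pad = a # map x [1..<n+1] @ [1]"
  have "chain_eqs a (map x [1..<n+1]) (map x' [1..<n+1]) \<longleftrightarrow>
      (\<forall>i<n. x (Suc i) * x' (Suc i) = 1 + pad ! i * pad ! Suc (Suc i))"
    unfolding chain_eqs_nth pad_def[symmetric] by (simp del: upt_Suc)
  also have "\<dots> \<longleftrightarrow>
      (\<forall>i<n. x (Suc i) * x' (Suc i) =
        1 + (if i = 0 then a else x i) * (if Suc (Suc i) \<le> n then x (Suc (Suc i)) else 1))"
  proof -
    have "pad ! i = (if i = 0 then a else x i)"
      and "pad ! Suc (Suc i) = (if Suc (Suc i) \<le> n then x (Suc (Suc i)) else 1)" if "i < n" for i
      using that nth_padded_map[of i n a x] nth_padded_map[of "Suc (Suc i)" n a x]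
      unfolding pad_def by auto
    then show ?thesis by simp
  qed
  also have "\<dots> \<longleftrightarrow>
      (\<forall>i<n. x (Suc i) * x' (Suc i) =
        1 + (if Suc i = 1 then a else x (Suc i - 1)) * (if Suc i = n then 1 else x (Suc i + 1)))"
    by (intro all_cong) (auto simp: Suc_le_eq)
  also have "\<dots> \<longleftrightarrow> A_eqs n a x x'"
    by (simp only: A_eqs_iff ball_atLeastAtMost_1_iff)
  finally show ?thesis by (rule sym)
qed

definition coord_lists :: "nat \<Rightarrow> (nat \<Rightarrow> 'a) \<times> (nat \<Rightarrow> 'a) \<Rightarrow> 'a list \<times> 'a list" where
  "coord_lists n p = (map (fst p) [1..<n+1], map (snd p) [1..<n+1])"

lemma coords_eqI:
  assumes "x \<in> coords n" "y \<in> coords n" "map x [1..<n+1] = map y [1..<n+1]"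
  shows "x = y"
proof
  fix i
  show "x i = y i"
  proof (cases "i \<in> {1..n}")
    case True
    then show ?thesis using assms(3) by (simp add: map_eq_conv del: upt_Suc)
  next
    case False
    then show ?thesis using assms(1,2) by (simp add: coords_def)
  qed
qed

lemma bij_betw_coord_lists: "bij_betw (coord_lists n) (X_A n a) (chain_sols n a)"
proof (rule bij_betw_imageI)
  show "inj_on (coord_lists n) (X_A n a)"
    by (auto simp: inj_on_def X_A_def coord_lists_def dest: coords_eqI simp del: upt_Suc)
  show "coord_lists n ` X_A n a = chain_sols n a"
  proof
    show "coord_lists n ` X_A n a \<subseteq> chain_sols n a"
      by (auto simp: X_A_def coord_lists_def chain_sols_def A_eqs_iff_chain_eqs simp del: upt_Suc)
  next
    show "chain_sols n a \<subseteq> coord_lists n ` X_A n a"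
    proof
      fix p assume p: "p \<in> chain_sols n a"
      then obtain xs xs' where p_def: "p = (xs, xs')" and len: "length xs = n" "length xs' = n"
        and eqs: "chain_eqs a xs xs'"
        by (auto simp: chain_sols_def dest: chain_eqs_length)
      define x where "x i = (if i \<in> {1..n} then xs ! (i - 1) else 0)" for i
      define x' where "x' i = (if i \<in> {1..n} then xs' ! (i - 1) else 0)" for i
      have "map x [1..<n+1] = xs" "map x' [1..<n+1] = xs'"
        by (auto intro!: nth_equalityI simp: x_def x'_def len simp del: upt_Suc)
      then have "(x, x') \<in> X_A n a" and "p = coord_lists n (x, x')"
        using eqs by (auto simp: X_A_def coords_def x_def x'_def coord_lists_def p_def
            A_eqs_iff_chain_eqs simp del: upt_Suc)
      then show "p \<in> coord_lists n ` X_A n a" by blast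
    qed
  qed
qed

lemma finite_X_A: "finite (X_A n (a::'a::{finite,field}))"
  using bij_betw_finite[OF bij_betw_coord_lists] finite_chain_sols by blast

lemma N_A_eq_card_chain_sols: "N_A n a = card (chain_sols n a)"
  unfolding N_A_def using bij_betw_coord_lists by (rule bij_betw_same_card)

theorem mainTheorem7:
  fixes n :: nat
  defines "q \<equiv> card (UNIV :: 'a::{finite,field} set)"
  shows "real (\<Sum>\<alpha>\<in>(UNIV::'a set) - {0}. N_A n \<alpha>)
           = (real q ^ (n + 2) + (-1) ^ (n + 1)) / (real q + 1)
       \<and> real (card (Y_A n :: ('a \<times> (nat \<Rightarrow> 'a) \<times> (nat \<Rightarrow> 'a)) set))
           = (real q ^ (n + 2) + (-1) ^ (n + 1)) / (real q + 1)"
proof -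
  define S where "S m = (\<Sum>\<alpha>\<in>UNIV - {0::'a}. card (chain_sols m \<alpha>))" for m
  have "q \<ge> 1" unfolding q_def by (simp add: Suc_leI finite_UNIV_card_ge_0)
  have S_rec: "S 0 = q - 1" "S 1 = (q - 1) * (q - 1) + q"
    "\<And>m. S (Suc (Suc m)) = (q - 1) * S (Suc m) + q * S m"
    unfolding S_def q_def
    by (simp_all only: sum_card_chain_sols_0 sum_card_chain_sols_1 sum_card_chain_sols_Suc_Suc)
  have "real (S 0) = real q - 1"
    and "real (S 1) = real q ^ 2 - real q + 1"
    and "\<And>m. real (S (Suc (Suc m))) = (real q - 1) * real (S (Suc m)) + real q * real (S m)"
    by (simp_all only: S_rec of_nat_add of_nat_mult of_nat_diff[OF \<open>q \<ge> 1\<close>] of_nat_1)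
      (simp_all add: power2_eq_square algebra_simps)
  then have "real (S n) * (real q + 1) = real q ^ (n + 2) + (-1) ^ (n + 1)"
    by (rule two_step_recurrence_closed_form)
  then have closed_form: "real (S n) = (real q ^ (n + 2) + (-1) ^ (n + 1)) / (real q + 1)"
    by (simp add: eq_divide_eq add_pos_nonneg)
  have "Y_A n = Sigma (UNIV - {0::'a}) (X_A n)"
    unfolding Y_A_def X_A_def by auto
  then have "card (Y_A n :: ('a \<times> (nat \<Rightarrow> 'a) \<times> (nat \<Rightarrow> 'a)) set) =
      (\<Sum>\<alpha>\<in>UNIV - {0::'a}. N_A n \<alpha>)"
    by (simp add: N_A_def finite_X_A)
  then show ?thesis
    using closed_form by (simp add: S_def N_A_eq_card_chain_sols)
qed

end
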